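(* Let $s\ge2$ and $1=a_1\le a_2\le\dots\le a_s$ with at least one of $a_2,\dots,a_s$ greater than $1$. Define $c_i=1-a_i^{-1}$ for $2\le i\le s$, $M_j=\tfrac12(c_2^j+\dots+c_s^j)$ for $j\ge1$, $$p_0=\prod_{i=2}^s a_i^{-1/2},\qquad p_j=\frac1j\sum_{i=0}^{j-1}M_{j-i}\,p_i\ \ (j\ge1),$$ and $W_i=\sum_{j=0}^i p_j$ for $i\ge0$. Then the sequence $\{W_i\}$ is log-concave: $W_i^2\ge W_{i-1}W_{i+1}$ for all $i\ge1$.
   Context: The $p_j$ are the mixture weights in the expansion $H(u)=\sum_{j\ge0}p_jG_{s+2j}(u)$ of the cdf of $\sum_{i=1}^s a_iY^{(i)}$ ($Y^{(i)}$ independent $\chi^2_1$) in terms of chi-square cdfs $G_{s+2j}$. *)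

theory Defs
  imports Complex_Main
begin

text \<open>Weights a_1,...,a_s given as a function a :: nat => real (indices 1..s).\<close>

definition cc :: "(nat \<Rightarrow> real) \<Rightarrow> nat \<Rightarrow> real" where
  "cc a i = 1 - 1 / a i"

definition MM :: "(nat \<Rightarrow> real) \<Rightarrow> nat \<Rightarrow> nat \<Rightarrow> real" where
  "MM a s j = (1/2) * (\<Sum>i=2..s. (cc a i) ^ j)"

fun plist :: "(nat \<Rightarrow> real) \<Rightarrow> nat \<Rightarrow> nat \<Rightarrow> real list" where
  "plist a s 0 = [\<Prod>i=2..s. a i powr (-1/2)]"
| "plist a s (Suc n) = plist a s n @
     [(1 / real (Suc n)) * (\<Sum>i=0..n. MM a s (Suc n - i) * (plist a s n ! i))]"

definition pp :: "(nat \<Rightarrow> real) \<Rightarrow> nat \<Rightarrow> nat \<Rightarrow> real" where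
  "pp a s j = plist a s j ! j"

definition WW :: "(nat \<Rightarrow> real) \<Rightarrow> nat \<Rightarrow> nat \<Rightarrow> real" where
  "WW a s i = (\<Sum>j=0..i. pp a s j)"

lemma pp_0: "pp a s 0 = (\<Prod>i=2..s. a i powr (-1/2))"
  by (simp add: pp_def)

end

theory Submission
  imports Defs "HOL-Computational_Algebra.Formal_Power_Series"
begin

(*
  Up to the factor p_0, the p_j are the coefficients of Q(x) = prod_i (1 - c_i x)^(-1/2): the
  recursion for p_j says x Q' = (sum_j M_j x^j) Q, and x times the logarithmic derivative of
  (1 - c x)^(-1/2) is c x / (2 (1 - c x)). So the W_i / p_0 are the coefficients of Q(x) / (1 - x),
  obtained from the all-ones sequence by successive multiplications with (1 - c x)^(-1/2),
  0 \<le> c \<le> 1, whose coefficients are nonnegative and nonincreasing.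

  Convolving a positive, nondecreasing, log-concave w with a nonnegative nonincreasing b keeps
  these three properties. For log-concavity, write b as a nonnegative combination of indicators
  of initial segments {0..m}; the convolution becomes a nonnegative combination of window sums
  w_j + ... + w_(j-m), and it suffices to prove the mixed inequality
  2 S_j T_j \<ge> S_(j-1) T_(j+1) + S_(j+1) T_(j-1) for any two window sums S, T, which follows
  by telescoping from log-concavity and monotonicity of w.
*)

unbundle fps_syntax

lemma sum_by_parts:
  fixes b f :: "nat \<Rightarrow> 'a::comm_ring"
  shows "(\<Sum>k\<le>N. b k * f k)
    = (\<Sum>m\<le>N. (b m - b (Suc m)) * (\<Sum>k\<le>m. f k)) + b (Suc N) * (\<Sum>k\<le>N. f k)"
  by (induction N) (simp_all add: algebra_simps)

text \<open>The polarisation of 2 (x_j^2 - x_(j-1) x_(j+1)).\<close>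

definition lc_defect :: "(int \<Rightarrow> real) \<Rightarrow> (int \<Rightarrow> real) \<Rightarrow> int \<Rightarrow> real" where
  "lc_defect x y j = 2 * x j * y j - x (j - 1) * y (j + 1) - x (j + 1) * y (j - 1)"

lemma lc_defect_commute: "lc_defect x y j = lc_defect y x j"
  by (simp add: lc_defect_def algebra_simps)

lemma lc_defect_sum_left:
  "lc_defect (\<lambda>J. \<Sum>k\<in>A. c k * x k J) y j = (\<Sum>k\<in>A. c k * lc_defect (x k) y j)"
  by (simp add: lc_defect_def right_diff_distrib sum_subtractf sum_distrib_left sum_distrib_right
      mult.assoc mult.left_commute)

lemma lc_defect_sum_right:
  "lc_defect x (\<lambda>J. \<Sum>k\<in>A. c k * y k J) j = (\<Sum>k\<in>A. c k * lc_defect x (y k) j)"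
  by (simp add: lc_defect_commute[of x] lc_defect_sum_left)

lemma lc_defect_sum_nonneg:
  assumes "\<And>k. k \<in> A \<Longrightarrow> 0 \<le> c k"
    and "\<And>k l. k \<in> A \<Longrightarrow> l \<in> A \<Longrightarrow> 0 \<le> lc_defect (x k) (x l) j"
  shows "0 \<le> lc_defect (\<lambda>J. \<Sum>k\<in>A. c k * x k J) (\<lambda>J. \<Sum>k\<in>A. c k * x k J) j"
proof -
  have "lc_defect (\<lambda>J. \<Sum>k\<in>A. c k * x k J) (\<lambda>J. \<Sum>k\<in>A. c k * x k J) j
      = (\<Sum>k\<in>A. \<Sum>l\<in>A. c k * (c l * lc_defect (x k) (x l) j))"
    by (simp add: lc_defect_sum_left lc_defect_sum_right sum_distrib_left)
  also have "\<dots> \<ge> 0"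
    using assms by (intro sum_nonneg mult_nonneg_nonneg) auto
  finally show ?thesis .
qed

text \<open>Log-concavity in the ratio form w_(q+1) / w_q \<le> w_p / w_(p-1), which, unlike
  w_(i-1) w_(i+1) \<le> w_i^2, is not destroyed by a run of leading zeros.\<close>

locale nondecr_log_concave =
  fixes w :: "int \<Rightarrow> real"
  assumes nonneg: "0 \<le> w i"
    and mono: "w i \<le> w (i + 1)"
    and log_concave: "p - 1 \<le> q \<Longrightarrow> w (p - 1) * w (q + 1) \<le> w p * w q"
begin

lemma mono_le: "u \<le> i \<Longrightarrow> w u \<le> w i"
  by (induction i rule: int_ge_induct) (auto intro: order_trans mono)

lemma increment_ratio:
  assumes "u \<le> i"
  shows "w u * (w (i + 2) - w (i + 1)) \<le> w (u + 1) * (w (i + 1) - w i)"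
proof (cases "w i = 0")
  case True
  then have "w u = 0"
    using mono_le[OF assms] nonneg[of u] by simp
  then show ?thesis
    using True nonneg[of "u + 1"] nonneg[of "i + 1"] by simp
next
  case False
  then have pos: "0 < w i"
    using nonneg[of i] by simp
  have local_lc: "w i * w (i + 2) \<le> w (i + 1) * w (i + 1)"
    using log_concave[of "i + 1" "i + 1"] by (simp add: add.assoc)
  have ratio: "w (i + 1) * w u \<le> w (u + 1) * w i"
    using log_concave[of "u + 1" i] assms by (simp add: mult.commute)
  have "w u * (w (i + 2) - w (i + 1)) * w i = w u * (w i * w (i + 2) - w i * w (i + 1))"
    by (simp add: algebra_simps)
  also have "\<dots> \<le> w u * (w (i + 1) * w (i + 1) - w i * w (i + 1))"
    using local_lc nonneg[of u] by (intro mult_left_mono) auto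
  also have "\<dots> = (w (i + 1) * w u) * (w (i + 1) - w i)"
    by (simp add: algebra_simps)
  also have "\<dots> \<le> (w (u + 1) * w i) * (w (i + 1) - w i)"
    using ratio mono[of i] by (intro mult_right_mono) auto
  also have "\<dots> = w (u + 1) * (w (i + 1) - w i) * w i"
    by (simp add: algebra_simps)
  finally show ?thesis
    using pos by (simp add: mult_le_cancel_right)
qed

lemma increment_ratio_telescoped:
  assumes "u \<le> p - 1" "p - 1 \<le> i"
  shows "w u * (w (i + 1) - w p) \<le> w (u + 1) * (w i - w (p - 1))"
  using assms(2)
proof (induction i rule: int_ge_induct)
  case base
  then show ?case by simp
next
  case (step i)
  have "w u * (w (i + 2) - w (i + 1)) \<le> w (u + 1) * (w (i + 1) - w i)"
    using increment_ratio[of u i] assms(1) step(1) by simp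
  with step(2) show ?case
    by (simp add: algebra_simps add.assoc)
qed

lemma cross_increment_nonneg:
  assumes "u < j" "p \<le> j"
  shows "0 \<le> w p * w u - w (p - 1) * w (u + 1) + w j * w (u + 1) - w (j + 1) * w u"
proof (cases "p - 1 \<le> u")
  case True
  have "w (p - 1) * w (u + 1) \<le> w p * w u"
    using log_concave[OF True] .
  moreover have "w u * w (j + 1) \<le> w (u + 1) * w j"
    using log_concave[of "u + 1" j] assms by simp
  ultimately show ?thesis
    by (simp add: algebra_simps)
next
  case False
  then have "w u * (w (j + 1) - w p) \<le> w (u + 1) * (w j - w (p - 1))"
    using increment_ratio_telescoped[of u p j] assms by simp
  then show ?thesis
    by (simp add: algebra_simps)
qed

definition window_sum :: "nat \<Rightarrow> int \<Rightarrow> real" where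
  "window_sum n j = (\<Sum>k\<le>n. w (j - int k))"

lemma window_sum_0 [simp]: "window_sum 0 j = w j"
  by (simp add: window_sum_def)

lemma window_sum_Suc: "window_sum (Suc n) j = window_sum n j + w (j - int n - 1)"
  by (simp add: window_sum_def algebra_simps)

lemma window_sum_shift: "window_sum n (j + 1) = window_sum n j + w (j + 1) - w (j - int n)"
  by (induction n) (simp_all add: window_sum_Suc algebra_simps)

text \<open>Against \<open>window_sum n\<close>, the shift \<open>\<lambda>J. w (J - k)\<close> has \<open>lc_defect\<close> equal to
  \<open>right_cross n j (j - k - 1) + left_cross n j (j - k)\<close>. Summing over \<open>k \<le> m\<close> regroups
  \<open>lc_defect (window_sum m) (window_sum n) j\<close> into the pairs of \<open>cross_inner_nonneg\<close> and
  the boundary pair of \<open>cross_outer_nonneg\<close>.\<close>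

definition right_cross :: "nat \<Rightarrow> int \<Rightarrow> int \<Rightarrow> real" where
  "right_cross n j q = w (q + 1) * window_sum n j - w q * window_sum n (j + 1)"

definition left_cross :: "nat \<Rightarrow> int \<Rightarrow> int \<Rightarrow> real" where
  "left_cross n j q = w q * window_sum n j - w (q + 1) * window_sum n (j - 1)"

lemma cross_inner_nonneg:
  assumes "j - int n \<le> q" "q < j"
  shows "0 \<le> right_cross n j q + left_cross n j q"
proof -
  have "right_cross n j q + left_cross n j q
      = (w (q + 1) * w j - w q * w (j + 1)) + (w q * w (j - int n) - w (q + 1) * w (j - int n - 1))"
  proof -
    have shift_down: "window_sum n (j - 1) = window_sum n j - w j + w (j - int n - 1)"
      using window_sum_shift[of n "j - 1"] by (simp add: algebra_simps)
    show ?thesis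
      unfolding right_cross_def left_cross_def window_sum_shift shift_down by (simp add: algebra_simps)
  qed
  moreover have "w q * w (j + 1) \<le> w (q + 1) * w j"
    using log_concave[of "q + 1" j] assms by simp
  moreover have "w (q + 1) * w (j - int n - 1) \<le> w q * w (j - int n)"
    using log_concave[of "j - int n" q] assms by (simp add: mult.commute)
  ultimately show ?thesis
    by simp
qed

lemma cross_outer_ge:
  assumes "p \<le> j"
  shows "(w p * w j - w (p - 1) * w (j + 1)) + (w j * w (j - int n) - w (j + 1) * w (j - int n - 1))
    \<le> right_cross n j (p - 1) + left_cross n j j"
proof (induction n)
  case 0
  then show ?case
    by (simp add: right_cross_def left_cross_def)
next
  case (Suc n)
  have "0 \<le> w p * w (j - int n - 1) - w (p - 1) * w (j - int n)
      + w j * w (j - int n) - w (j + 1) * w (j - int n - 1)"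
    using cross_increment_nonneg[of "j - int n - 1" j p] assms by simp
  with Suc show ?case
    by (simp add: right_cross_def left_cross_def window_sum_Suc algebra_simps)
qed

lemma cross_outer_nonneg:
  assumes "p \<le> j"
  shows "0 \<le> right_cross n j (p - 1) + left_cross n j j"
proof -
  have "w (p - 1) * w (j + 1) \<le> w p * w j"
    using log_concave[of p j] assms by simp
  moreover have "w (j - int n - 1) * w (j + 1) \<le> w (j - int n) * w j"
    using log_concave[of "j - int n" j] by simp
  ultimately show ?thesis
    using cross_outer_ge[OF assms, of n] by (simp add: algebra_simps)
qed

lemma lc_defect_window_sums_ge:
  assumes "m \<le> n"
  shows "right_cross n j (j - int m - 1) + left_cross n j j
    \<le> lc_defect (window_sum m) (window_sum n) j"
  using assms
proof (induction m)
  case 0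
  then show ?case
    by (simp add: lc_defect_def right_cross_def left_cross_def)
next
  case (Suc m)
  have "lc_defect (window_sum (Suc m)) (window_sum n) j
      = lc_defect (window_sum m) (window_sum n) j
        + right_cross n j (j - int m - 2) + left_cross n j (j - int m - 1)"
  proof -
    have "j - 1 - int m - 1 = j - int m - 2" "j + 1 - int m - 1 = j - int m"
      "j - int m - 2 + 1 = j - int m - 1" "j - int m - 1 + 1 = j - int m"
      by simp_all
    then show ?thesis
      unfolding lc_defect_def right_cross_def left_cross_def window_sum_Suc
      by (simp add: algebra_simps)
  qed
  moreover have "0 \<le> right_cross n j (j - int m - 1) + left_cross n j (j - int m - 1)"
    using cross_inner_nonneg Suc.prems by simp
  ultimately show ?case
    using Suc by simp
qed

lemma lc_defect_window_sums_nonneg: "0 \<le> lc_defect (window_sum m) (window_sum n) j"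
proof -
  have ordered: "0 \<le> lc_defect (window_sum m) (window_sum n) j" if "m \<le> n" for m n
    using lc_defect_window_sums_ge[OF that, of j] cross_outer_nonneg[of "j - int m" j n] by simp
  show ?thesis
  proof (cases "m \<le> n")
    case False
    then have "0 \<le> lc_defect (window_sum n) (window_sum m) j"
      by (intro ordered) simp
    then show ?thesis
      by (metis lc_defect_commute)
  qed (rule ordered)
qed

lemma lc_defect_conv_nonneg:
  assumes "\<And>m. m \<le> N \<Longrightarrow> b (Suc m) \<le> b m" "b (Suc N) = 0"
  defines "v \<equiv> \<lambda>J. \<Sum>k\<le>N. b k * w (J - int k)"
  shows "0 \<le> lc_defect v v j"
proof -
  have "v = (\<lambda>J. \<Sum>m\<le>N. (b m - b (Suc m)) * window_sum m J)"
  proof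
    fix J
    show "v J = (\<Sum>m\<le>N. (b m - b (Suc m)) * window_sum m J)"
      using sum_by_parts[of b "\<lambda>k. w (J - int k)" N] assms(2)
      by (simp add: v_def window_sum_def)
  qed
  then show ?thesis
    using assms(1) lc_defect_window_sums_nonneg by (auto intro!: lc_defect_sum_nonneg)
qed

end

definition pos_mono_log_concave :: "(nat \<Rightarrow> real) \<Rightarrow> bool" where
  "pos_mono_log_concave w \<longleftrightarrow>
     (\<forall>i. 0 < w i \<and> w i \<le> w (Suc i) \<and> w i * w (i + 2) \<le> (w (Suc i))\<^sup>2)"

lemma log_concave_ratio_mono:
  fixes w :: "nat \<Rightarrow> real"
  assumes pos: "\<And>i. 0 < w i" and lc: "\<And>i. w i * w (i + 2) \<le> (w (Suc i))\<^sup>2"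
    and "i \<le> k"
  shows "w (k + 1) * w i \<le> w (i + 1) * w k"
  using assms(3)
proof (induction k rule: dec_induct)
  case base
  then show ?case by (simp add: mult.commute)
next
  case (step k)
  have local_lc: "w (k + 2) * w k \<le> w (k + 1) * w (k + 1)"
    using lc[of k] by (simp add: power2_eq_square mult.commute)
  have "(w (k + 2) * w i) * w k = (w (k + 2) * w k) * w i"
    by (simp add: algebra_simps)
  also have "\<dots> \<le> (w (k + 1) * w (k + 1)) * w i"
    using local_lc pos[of i] by (intro mult_right_mono) auto
  also have "\<dots> = (w (k + 1) * w i) * w (k + 1)"
    by (simp add: algebra_simps)
  also have "\<dots> \<le> (w (i + 1) * w k) * w (k + 1)"
    using step(3) pos[of "k + 1"] by (intro mult_right_mono) auto
  also have "\<dots> = (w (i + 1) * w (k + 1)) * w k"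
    by (simp add: algebra_simps)
  finally have "w (k + 2) * w i \<le> w (i + 1) * w (k + 1)"
    using pos[of k] by (simp add: mult_le_cancel_right)
  then show ?case
    by (simp add: add.assoc)
qed

definition zero_ext :: "(nat \<Rightarrow> real) \<Rightarrow> int \<Rightarrow> real" where
  "zero_ext w i = (if i < 0 then 0 else w (nat i))"

lemma nondecr_log_concave_zero_ext:
  assumes "pos_mono_log_concave w"
  shows "nondecr_log_concave (zero_ext w)"
proof -
  have pos: "\<And>i. 0 < w i" and mono: "\<And>i. w i \<le> w (Suc i)"
    and lc: "\<And>i. w i * w (i + 2) \<le> (w (Suc i))\<^sup>2"
    using assms by (auto simp: pos_mono_log_concave_def)
  show ?thesis
  proof
    fix i
    show "0 \<le> zero_ext w i"
      using pos[of "nat i"] by (simp add: zero_ext_def less_imp_le)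
    show "zero_ext w i \<le> zero_ext w (i + 1)"
      using pos[of "nat i"] mono[of "nat i"] pos[of 0]
      by (auto simp: zero_ext_def less_imp_le nat_add_distrib)
  next
    fix p q :: int
    assume "p - 1 \<le> q"
    show "zero_ext w (p - 1) * zero_ext w (q + 1) \<le> zero_ext w p * zero_ext w q"
    proof (cases "p - 1 < 0")
      case True
      then show ?thesis
        using pos by (simp add: zero_ext_def less_imp_le)
    next
      case False
      have "w (nat q + 1) * w (nat (p - 1)) \<le> w (nat (p - 1) + 1) * w (nat q)"
        using log_concave_ratio_mono[OF pos lc] \<open>p - 1 \<le> q\<close> False by simp
      moreover have "nat p = nat (p - 1) + 1" "nat (q + 1) = nat q + 1"
        using \<open>p - 1 \<le> q\<close> False by simp_all
      ultimately show ?thesis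
        using \<open>p - 1 \<le> q\<close> False by (simp add: zero_ext_def mult.commute)
    qed
  qed
qed

lemma log_concave_conv:
  assumes w: "pos_mono_log_concave w"
    and b: "\<And>k. 0 \<le> b k" "\<And>k. b (Suc k) \<le> b k"
  defines "v \<equiv> \<lambda>n. \<Sum>k\<le>n. b k * w (n - k)"
  shows "v i * v (i + 2) \<le> (v (Suc i))\<^sup>2"
proof -
  interpret nondecr_log_concave "zero_ext w"
    by (rule nondecr_log_concave_zero_ext[OF w])
  define N where "N = i + 2"
  define bt where "bt k = (if k \<le> N then b k else 0)" for k
  define u where "u J = (\<Sum>k\<le>N. bt k * zero_ext w (J - int k))" for J
  have u_v: "u (int n) = v n" if "n \<le> N" for n
    unfolding u_def v_def
  proof (rule sum.mono_neutral_cong_right)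
    show "\<forall>k\<in>{..N} - {..n}. bt k * zero_ext w (int n - int k) = 0"
      by (auto simp: zero_ext_def)
    show "bt k * zero_ext w (int n - int k) = b k * w (n - k)" if "k \<in> {..n}" for k
      using that \<open>n \<le> N\<close> by (simp add: bt_def zero_ext_def of_nat_diff[symmetric] del: of_nat_diff)
  qed (use that in auto)
  have "0 \<le> lc_defect u u (int (Suc i))"
    unfolding u_def by (rule lc_defect_conv_nonneg) (use b in \<open>auto simp: bt_def\<close>)
  moreover have "int (Suc i) - 1 = int i" "int (Suc i) + 1 = int (i + 2)"
    by simp_all
  ultimately show ?thesis
    using u_v[of i] u_v[of "Suc i"] u_v[of "i + 2"]
    by (simp add: lc_defect_def N_def power2_eq_square del: of_nat_Suc of_nat_add)
qed

lemma pos_mono_log_concave_conv: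
  assumes w: "pos_mono_log_concave w"
    and b: "\<And>k. 0 \<le> b k" "\<And>k. b (Suc k) \<le> b k" "0 < b 0"
  shows "pos_mono_log_concave (\<lambda>n. \<Sum>k\<le>n. b k * w (n - k))"
  unfolding pos_mono_log_concave_def
proof (intro allI conjI)
  fix i
  have pos: "\<And>i. 0 < w i" and mono: "\<And>i. w i \<le> w (Suc i)"
    using w by (auto simp: pos_mono_log_concave_def)
  have terms_nonneg: "0 \<le> b k * w n" for k n
    using b(1) pos by (simp add: less_imp_le)
  have "0 < b 0 * w i"
    using b(3) pos by simp
  also have "\<dots> \<le> (\<Sum>k\<le>i. b k * w (i - k))"
    using member_le_sum[of 0 "{..i}" "\<lambda>k. b k * w (i - k)"] terms_nonneg by simp
  finally show "0 < (\<Sum>k\<le>i. b k * w (i - k))" .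
  have "(\<Sum>k\<le>i. b k * w (i - k)) \<le> (\<Sum>k\<le>i. b k * w (Suc i - k))"
    by (rule sum_mono) (use b(1) mono in \<open>auto intro!: mult_left_mono simp: Suc_diff_le\<close>)
  also have "\<dots> \<le> (\<Sum>k\<le>Suc i. b k * w (Suc i - k))"
    by (rule sum_mono2) (use terms_nonneg in auto)
  finally show "(\<Sum>k\<le>i. b k * w (i - k)) \<le> (\<Sum>k\<le>Suc i. b k * w (Suc i - k))" .
  show "(\<Sum>k\<le>i. b k * w (i - k)) * (\<Sum>k\<le>i + 2. b k * w (i + 2 - k))
      \<le> (\<Sum>k\<le>Suc i. b k * w (Suc i - k))\<^sup>2"
    using log_concave_conv[of w b i] w b(1,2) by simp
qed

text \<open>\<open>fps_isqrt c = (1 - c X)^(-1/2)\<close>, with coefficients (2n choose n) (c/4)^n, and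
  \<open>fps_isqrt_log_deriv c = c X / (2 (1 - c X))\<close>.\<close>

fun isqrt_coeff :: "real \<Rightarrow> nat \<Rightarrow> real" where
  "isqrt_coeff c 0 = 1"
| "isqrt_coeff c (Suc n) = c * (2 * real n + 1) / (2 * real n + 2) * isqrt_coeff c n"

definition fps_isqrt :: "real \<Rightarrow> real fps" where
  "fps_isqrt c = Abs_fps (isqrt_coeff c)"

definition fps_isqrt_log_deriv :: "real \<Rightarrow> real fps" where
  "fps_isqrt_log_deriv c = Abs_fps (\<lambda>k. if k = 0 then 0 else c ^ k / 2)"

definition X_log_deriv :: "real fps \<Rightarrow> real fps \<Rightarrow> bool" where
  "X_log_deriv A F \<longleftrightarrow> fps_X * fps_deriv F = A * F"

lemma X_log_deriv_fps_isqrt: "X_log_deriv (fps_isqrt_log_deriv c) (fps_isqrt c)"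
proof -
  \<comment> \<open>After multiplication by \<open>L\<close> both sides equal \<open>(c/2) X fps_isqrt c\<close>.\<close>
  define L where "L = 1 - fps_const c * fps_X"
  have "L * fps_isqrt_log_deriv c = fps_const (c / 2) * fps_X"
  proof (rule fps_ext)
    fix n
    show "(L * fps_isqrt_log_deriv c) $ n = (fps_const (c / 2) * fps_X) $ n"
      by (cases n; cases "n - 1") (auto simp: L_def fps_isqrt_log_deriv_def algebra_simps)
  qed
  moreover have "L * (fps_X * fps_deriv (fps_isqrt c)) = fps_const (c / 2) * fps_X * fps_isqrt c"
  proof (rule fps_ext)
    fix n
    show "(L * (fps_X * fps_deriv (fps_isqrt c))) $ n = (fps_const (c / 2) * fps_X * fps_isqrt c) $ n"
    proof (cases n)
      case (Suc m)
      have "real (Suc m) * isqrt_coeff c (Suc m) = c * real m * isqrt_coeff c m + c / 2 * isqrt_coeff c m"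
        by (simp add: field_simps)
      with Suc show ?thesis
        by (cases m) (simp_all add: L_def fps_isqrt_def algebra_simps del: isqrt_coeff.simps)
    qed (simp add: L_def)
  qed
  moreover have "L $ 0 = 1"
    by (simp add: L_def)
  ultimately show ?thesis
    unfolding X_log_deriv_def by (metis mult.assoc mult_left_cancel one_neq_zero fps_zero_nth)
qed

lemma X_log_deriv_mult: "X_log_deriv A F \<Longrightarrow> X_log_deriv B G \<Longrightarrow> X_log_deriv (A + B) (F * G)"
  unfolding X_log_deriv_def by (simp add: algebra_simps)

lemma X_log_deriv_prod:
  assumes "finite I" "\<And>i. i \<in> I \<Longrightarrow> X_log_deriv (A i) (F i)"
  shows "X_log_deriv (\<Sum>i\<in>I. A i) (\<Prod>i\<in>I. F i)"
  using assms
proof (induction I rule: finite_induct)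
  case (insert x I)
  then show ?case
    using X_log_deriv_mult[of "A x" "F x"] by simp
qed (simp add: X_log_deriv_def)

lemma X_log_deriv_nth:
  assumes "X_log_deriv A F"
  shows "real n * F $ n = (\<Sum>i=0..n. A $ (n - i) * F $ i)"
proof -
  have "real n * F $ n = (fps_X * fps_deriv F) $ n"
    by (cases n) simp_all
  also have "\<dots> = (F * A) $ n"
    using assms by (simp add: X_log_deriv_def mult.commute)
  also have "\<dots> = (\<Sum>i=0..n. F $ i * A $ (n - i))"
    by (rule fps_mult_nth)
  finally show ?thesis
    by (simp add: mult.commute)
qed

lemma prod_fps_isqrt_nth_0: "(\<Prod>i\<in>I. fps_isqrt (c i)) $ 0 = 1"
  by (induction I rule: infinite_finite_induct) (simp_all add: fps_isqrt_def)

lemma isqrt_coeff_nonneg: "0 \<le> c \<Longrightarrow> 0 \<le> isqrt_coeff c n"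
  by (induction n) auto

lemma isqrt_coeff_Suc_le:
  assumes "0 \<le> c" "c \<le> 1"
  shows "isqrt_coeff c (Suc n) \<le> isqrt_coeff c n"
proof -
  have "c * (2 * real n + 1) / (2 * real n + 2) \<le> 1"
    using assms by (simp add: field_simps) (smt (verit) mult_left_le_one_le of_nat_0_le_iff)
  then have "c * (2 * real n + 1) / (2 * real n + 2) * isqrt_coeff c n \<le> 1 * isqrt_coeff c n"
    using isqrt_coeff_nonneg[OF assms(1)] by (rule mult_right_mono)
  then show ?thesis
    by simp
qed

lemma pos_mono_log_concave_mult_fps_isqrt:
  assumes "pos_mono_log_concave (fps_nth F)" "0 \<le> c" "c \<le> 1"
  shows "pos_mono_log_concave (fps_nth (F * fps_isqrt c))"
proof -
  have "fps_nth (F * fps_isqrt c) = (\<lambda>n. \<Sum>k\<le>n. isqrt_coeff c k * F $ (n - k))"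
    by (rule ext, subst mult.commute) (simp add: fps_mult_nth fps_isqrt_def atLeast0AtMost)
  then show ?thesis
    using pos_mono_log_concave_conv[OF assms(1), of "isqrt_coeff c"]
      isqrt_coeff_nonneg[OF assms(2)] isqrt_coeff_Suc_le[OF assms(2,3)] by simp
qed

lemma pos_mono_log_concave_mult_prod_fps_isqrt:
  assumes "pos_mono_log_concave (fps_nth F)" "finite I" "\<And>i. i \<in> I \<Longrightarrow> 0 \<le> c i \<and> c i \<le> 1"
  shows "pos_mono_log_concave (fps_nth (F * (\<Prod>i\<in>I. fps_isqrt (c i))))"
  using assms(2,3)
proof (induction I rule: finite_induct)
  case empty
  then show ?case using assms(1) by simp
next
  case (insert x I)
  then have "pos_mono_log_concave (fps_nth ((F * (\<Prod>i\<in>I. fps_isqrt (c i))) * fps_isqrt (c x)))"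
    by (intro pos_mono_log_concave_mult_fps_isqrt) auto
  with insert(1,2) show ?case
    by (simp add: mult_ac)
qed

lemma plist_length: "length (plist a s n) = Suc n"
  by (induction n) auto

lemma plist_nth: "i \<le> n \<Longrightarrow> plist a s n ! i = pp a s i"
proof (induction n)
  case 0
  then show ?case by (simp add: pp_def)
next
  case (Suc n)
  show ?case
  proof (cases "i \<le> n")
    case True
    then show ?thesis
      using Suc by (simp add: nth_append plist_length)
  next
    case False
    then show ?thesis
      using Suc.prems by (simp add: pp_def le_Suc_eq)
  qed
qed

lemma pp_Suc: "pp a s (Suc m) = 1 / real (Suc m) * (\<Sum>i=0..m. MM a s (Suc m - i) * pp a s i)"
proof -
  have "pp a s (Suc m) = 1 / real (Suc m) * (\<Sum>i=0..m. MM a s (Suc m - i) * (plist a s m ! i))"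
    by (simp add: pp_def nth_append plist_length)
  then show ?thesis
    by (simp add: plist_nth)
qed

lemma prod_fps_isqrt_recurrence:
  fixes a :: "nat \<Rightarrow> real" and s :: nat
  defines "Q \<equiv> \<Prod>i=2..s. fps_isqrt (cc a i)"
  shows "real (Suc m) * Q $ Suc m = (\<Sum>i=0..m. MM a s (Suc m - i) * Q $ i)"
proof -
  define A where "A = (\<Sum>i=2..s. fps_isqrt_log_deriv (cc a i))"
  have "X_log_deriv A Q"
    unfolding A_def Q_def by (intro X_log_deriv_prod X_log_deriv_fps_isqrt) simp
  then have "real (Suc m) * Q $ Suc m = (\<Sum>i=0..Suc m. A $ (Suc m - i) * Q $ i)"
    by (rule X_log_deriv_nth)
  moreover have "A $ k = (if k = 0 then 0 else MM a s k)" for k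
    by (simp add: A_def fps_sum_nth fps_isqrt_log_deriv_def MM_def sum_divide_distrib)
  ultimately show ?thesis
    by (simp add: Suc_diff_le)
qed

lemma pp_eq_prod_fps_isqrt_nth: "pp a s j = pp a s 0 * (\<Prod>i=2..s. fps_isqrt (cc a i)) $ j"
proof (induction j rule: less_induct)
  case (less j)
  let ?Q = "\<Prod>i=2..s. fps_isqrt (cc a i)"
  show ?case
  proof (cases j)
    case 0
    then show ?thesis
      by (simp add: prod_fps_isqrt_nth_0)
  next
    case (Suc m)
    have "(\<Sum>i=0..m. MM a s (Suc m - i) * pp a s i) = (\<Sum>i=0..m. MM a s (Suc m - i) * (pp a s 0 * ?Q $ i))"
    proof (rule sum.cong)
      show "MM a s (Suc m - i) * pp a s i = MM a s (Suc m - i) * (pp a s 0 * ?Q $ i)" if "i \<in> {0..m}" for i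
        using less.IH[of i] that Suc by simp
    qed simp
    then have "pp a s (Suc m) = pp a s 0 * (1 / real (Suc m) * (\<Sum>i=0..m. MM a s (Suc m - i) * ?Q $ i))"
      unfolding pp_Suc by (simp add: sum_distrib_left mult_ac)
    also have "\<dots> = pp a s 0 * ?Q $ Suc m"
      using prod_fps_isqrt_recurrence[where m = m] by (simp add: field_simps)
    finally show ?thesis
      using Suc by simp
  qed
qed

lemma WW_eq_partial_sums_nth:
  "WW a s i = pp a s 0 * (Abs_fps (\<lambda>_. 1) * (\<Prod>i=2..s. fps_isqrt (cc a i))) $ i"
proof -
  let ?Q = "\<Prod>i=2..s. fps_isqrt (cc a i)"
  have "WW a s i = (\<Sum>j=0..i. pp a s 0 * ?Q $ j)"
    unfolding WW_def by (rule sum.cong[OF refl]) (rule pp_eq_prod_fps_isqrt_nth)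
  also have "\<dots> = pp a s 0 * (?Q * Abs_fps (\<lambda>_. 1)) $ i"
    by (simp add: fps_mult_nth sum_distrib_left)
  finally show ?thesis
    by (simp add: mult.commute)
qed

lemma cc_bounds: "1 \<le> a i \<Longrightarrow> 0 \<le> cc a i \<and> cc a i \<le> 1"
  by (simp add: cc_def)

lemma one_le_of_mono_from_one:
  fixes a :: "nat \<Rightarrow> real"
  assumes "a 1 = 1" "\<And>i. 1 \<le> i \<Longrightarrow> i < s \<Longrightarrow> a i \<le> a (Suc i)" "1 \<le> i" "i \<le> s"
  shows "1 \<le> a i"
  using assms(3,4)
proof (induction i rule: dec_induct)
  case base
  then show ?case
    using assms(1) by simp
next
  case (step n)
  then show ?case
    using assms(2)[of n] by simp
qed

theorem lemma3:
  fixes a :: "nat \<Rightarrow> real" and s :: nat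
  assumes "s \<ge> 2"
    and "a 1 = 1"
    and "\<And>i. 1 \<le> i \<Longrightarrow> i < s \<Longrightarrow> a i \<le> a (Suc i)"
    and "\<exists>i\<in>{2..s}. a i > 1"
  shows "\<forall>i\<ge>1. (WW a s i)^2 \<ge> WW a s (i - 1) * WW a s (i + 1)"
proof (intro allI impI)
  fix i :: nat
  assume "1 \<le> i"
  then obtain k where k: "i = Suc k"
    by (cases i) auto
  define F where "F = Abs_fps (\<lambda>_. 1) * (\<Prod>i=2..s. fps_isqrt (cc a i))"
  have "0 \<le> cc a i \<and> cc a i \<le> 1" if "i \<in> {2..s}" for i
    using cc_bounds one_le_of_mono_from_one[OF assms(2,3)] that by simp
  then have "pos_mono_log_concave (fps_nth F)"
    unfolding F_def by (intro pos_mono_log_concave_mult_prod_fps_isqrt) (auto simp: pos_mono_log_concave_def)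
  then have "(pp a s 0)\<^sup>2 * (F $ k * F $ (k + 2)) \<le> (pp a s 0)\<^sup>2 * (F $ Suc k)\<^sup>2"
    by (intro mult_left_mono) (auto simp: pos_mono_log_concave_def)
  then show "WW a s (i - 1) * WW a s (i + 1) \<le> (WW a s i)\<^sup>2"
    unfolding k WW_eq_partial_sums_nth F_def[symmetric] by (simp add: power2_eq_square mult_ac)
qed

end
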